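(* For every $O\in\mathcal P_n$: 1. $\log U(O)=\sum_{\gamma\in\Gamma}\log U_\gamma(O)$. 2. For every $\gamma\in\Gamma$, $\log U_\gamma(O)=0$ if $\mathrm{supp}(O)\not\subseteq\gamma$; and $\log U(O)=0$ if $\mathrm{supp}(O)\not\subseteq\gamma$ for all $\gamma\in\Gamma$.
   Context: $\mathcal P_n=\{I,X,Y,Z\}^{\otimes n}$ (no phases); $[[A,B]]=1$ if $A,B$ commute and $-1$ otherwise. $\Gamma$ is a finite collection of subsets $\gamma\subseteq\{1,\dots,n\}$; each $\gamma$ carries a Pauli channel with error distribution $P_\gamma$ on $\mathcal P_n$ with $P_\gamma(e)=0$ unless $\mathrm{supp}(e)\subseteq\gamma$, and $P_\gamma(I)>1/2$, $P_\gamma(e)>0$ for all non-identity $e$ supported in $\gamma$. Local Pauli eigenvalues: $\Lambda_\gamma(O)=\sum_eP_\gamma(e)[[e,O]]$ (these are positive and depend only on $O_\gamma$, the restriction of $O$ to $\gamma$ with identity elsewhere). The total channel has eigenvalues $\Lambda(O)=\prod_{\gamma}\Lambda_\gamma(O_\gamma)$. Transformed eigenvalues: $\log U(O)=-\frac{2}{4^n}\sum_{O'\in\mathcal P_n}[[O',O]]\log\Lambda(O')$ and $\log U_\gamma(O)=-\frac{2}{4^n}\sum_{O'\in\mathcal P_n}[[O',O]]\log\Lambda_\gamma(O'_\gamma)$. *)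

theory Defs
  imports Complex_Main
begin

datatype pauli = PI | PX | PY | PZ

definition paulis :: "nat \<Rightarrow> (nat \<Rightarrow> pauli) set" where
  "paulis n = {p. \<forall>i. i \<notin> {1..n} \<longrightarrow> p i = PI}"

definition supp :: "(nat \<Rightarrow> pauli) \<Rightarrow> nat set" where
  "supp p = {i. p i \<noteq> PI}"

definition anticomm1 :: "pauli \<Rightarrow> pauli \<Rightarrow> bool" where
  "anticomm1 a b \<longleftrightarrow> a \<noteq> PI \<and> b \<noteq> PI \<and> a \<noteq> b"

text \<open>[[A,B]] = 1 if A,B commute, -1 otherwise.\<close>
definition comm :: "nat \<Rightarrow> (nat \<Rightarrow> pauli) \<Rightarrow> (nat \<Rightarrow> pauli) \<Rightarrow> real" where
  "comm n A B = (-1) ^ card {i \<in> {1..n}. anticomm1 (A i) (B i)}"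

definition restr :: "nat set \<Rightarrow> (nat \<Rightarrow> pauli) \<Rightarrow> (nat \<Rightarrow> pauli)" where
  "restr g Q = (\<lambda>i. if i \<in> g then Q i else PI)"

definition LamG :: "nat \<Rightarrow> (nat set \<Rightarrow> (nat \<Rightarrow> pauli) \<Rightarrow> real) \<Rightarrow> nat set \<Rightarrow> (nat \<Rightarrow> pauli) \<Rightarrow> real" where
  "LamG n P g Q = (\<Sum>e\<in>paulis n. P g e * comm n e Q)"

definition Lam :: "nat \<Rightarrow> nat set set \<Rightarrow> (nat set \<Rightarrow> (nat \<Rightarrow> pauli) \<Rightarrow> real) \<Rightarrow> (nat \<Rightarrow> pauli) \<Rightarrow> real" where
  "Lam n Gam P Q = (\<Prod>g\<in>Gam. LamG n P g (restr g Q))"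

definition logU :: "nat \<Rightarrow> nat set set \<Rightarrow> (nat set \<Rightarrow> (nat \<Rightarrow> pauli) \<Rightarrow> real) \<Rightarrow> (nat \<Rightarrow> pauli) \<Rightarrow> real" where
  "logU n Gam P Q = - 2 / 4 ^ n * (\<Sum>Q'\<in>paulis n. comm n Q' Q * ln (Lam n Gam P Q'))"

definition logUG :: "nat \<Rightarrow> (nat set \<Rightarrow> (nat \<Rightarrow> pauli) \<Rightarrow> real) \<Rightarrow> nat set \<Rightarrow> (nat \<Rightarrow> pauli) \<Rightarrow> real" where
  "logUG n P g Q = - 2 / 4 ^ n * (\<Sum>Q'\<in>paulis n. comm n Q' Q * ln (LamG n P g (restr g Q')))"

end

theory Submission
  imports Defs
begin

text \<open>
  Every local eigenvalue is positive, because the identity carries more than half of the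
  weight of P_\<gamma>; hence the logarithm turns the product \<Lambda> into a sum of logarithms,
  and the transform, being linear, splits accordingly. If O acts nontrivially at a site
  i \<notin> \<gamma>, multiply each O' at i by a single-qubit Pauli anticommuting with O_i: this
  involution of the Pauli strings fixes O'_\<gamma> but flips the sign of [[O', O]], so the terms
  of log U_\<gamma>(O) cancel in pairs.
\<close>

fun pauli_mult :: "pauli \<Rightarrow> pauli \<Rightarrow> pauli" where
  "pauli_mult PI b = b"
| "pauli_mult a PI = a"
| "pauli_mult PX PX = PI" | "pauli_mult PX PY = PZ" | "pauli_mult PX PZ = PY"
| "pauli_mult PY PX = PZ" | "pauli_mult PY PY = PI" | "pauli_mult PY PZ = PX"
| "pauli_mult PZ PX = PY" | "pauli_mult PZ PY = PX" | "pauli_mult PZ PZ = PI"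

lemma pauli_mult_PI_right [simp]: "pauli_mult a PI = a"
  by (cases a) simp_all

lemma pauli_mult_cancel_right: "pauli_mult (pauli_mult a b) b = a"
  by (cases a; cases b; simp)

lemma anticomm1_pauli_mult: "anticomm1 (pauli_mult a b) c \<longleftrightarrow> anticomm1 a c \<noteq> anticomm1 b c"
  by (cases a; cases b; cases c; simp add: anticomm1_def)

lemma ex_anticomm1: "c \<noteq> PI \<Longrightarrow> \<exists>b. anticomm1 b c"
  by (cases c) (auto simp: anticomm1_def intro: exI[of _ PX] exI[of _ PY])

lemma finite_paulis: "finite (paulis n)"
proof -
  have "(UNIV :: pauli set) = {PI, PX, PY, PZ}"
    using pauli.exhaust by auto
  then have "finite (UNIV :: pauli set)"
    by (metis finite.emptyI finite_insert)
  then have "finite {p. \<forall>i. (i \<in> {1..n} \<longrightarrow> p i \<in> UNIV) \<and> (i \<notin> {1..n} \<longrightarrow> p i = PI)}"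
    using finite_set_of_finite_funs[of "{1..n}" UNIV PI] by simp
  then show ?thesis
    by (simp add: paulis_def)
qed

lemma comm_eq_prod: "comm n A B = (\<Prod>i\<in>{1..n}. if anticomm1 (A i) (B i) then -1 else 1)"
proof -
  have "{i \<in> {1..n}. anticomm1 (A i) (B i)} = {1..n} \<inter> {i. anticomm1 (A i) (B i)}"
    by auto
  then show ?thesis
    unfolding comm_def by (simp add: prod.If_cases)
qed

lemma comm_pauli_mult:
  "comm n (\<lambda>i. pauli_mult (A i) (B i)) Q = comm n A Q * comm n B Q"
  unfolding comm_eq_prod prod.distrib[symmetric]
  by (rule prod.cong) (auto simp: anticomm1_pauli_mult)

lemma comm_cases: "comm n A B = 1 \<or> comm n A B = -1"
  unfolding comm_def by (induct ("card {i \<in> {1..n}. anticomm1 (A i) (B i)}")) auto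

lemma comm_identity: "comm n (\<lambda>i. PI) B = 1"
  unfolding comm_def anticomm1_def by simp

lemma comm_single_site:
  assumes "i \<in> {1..n}" and "anticomm1 b (Q i)"
  shows "comm n (\<lambda>j. if j = i then b else PI) Q = -1"
proof -
  have "{j \<in> {1..n}. anticomm1 (if j = i then b else PI) (Q j)} = {i}"
    using assms by (auto simp: anticomm1_def)
  then show ?thesis
    by (simp add: comm_def)
qed

lemma sum_comm_restr_eq_0:
  assumes Q: "Q \<in> paulis n" and not_local: "\<not> supp Q \<subseteq> g"
  shows "(\<Sum>Q'\<in>paulis n. comm n Q' Q * f (restr g Q')) = 0"
proof -
  obtain i where i: "Q i \<noteq> PI" "i \<notin> g"
    using not_local by (auto simp: supp_def)
  have i_range: "i \<in> {1..n}"
    using Q i(1) by (auto simp: paulis_def)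
  obtain b where b: "anticomm1 b (Q i)"
    using ex_anticomm1[OF i(1)] by blast
  define E where "E = (\<lambda>j. if j = i then b else PI)"
  define s where "s = (\<lambda>A j. pauli_mult (A j) (E j))"
  have s_s: "s (s A) = A" for A
    by (simp add: s_def pauli_mult_cancel_right)
  have s_paulis: "s A \<in> paulis n" if "A \<in> paulis n" for A
    using that i_range by (auto simp: paulis_def s_def E_def)
  have s_bij: "bij_betw s (paulis n) (paulis n)"
    by (rule bij_betw_byWitness[where f' = s]) (auto simp: s_s s_paulis)
  have restr_s: "restr g (s A) = restr g A" for A
    using i(2) by (auto simp: restr_def s_def E_def)
  have comm_E: "comm n E Q = -1"
    unfolding E_def using i_range b by (rule comm_single_site)
  have comm_s: "comm n (s A) Q = - comm n A Q" for A
    unfolding s_def comm_pauli_mult comm_E by simp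
  let ?S = "\<Sum>Q'\<in>paulis n. comm n Q' Q * f (restr g Q')"
  have "?S = (\<Sum>Q'\<in>paulis n. comm n (s Q') Q * f (restr g (s Q')))"
    using sum.reindex_bij_betw[OF s_bij, of "\<lambda>Q'. comm n Q' Q * f (restr g Q')"] by simp
  also have "\<dots> = - ?S"
    by (simp add: comm_s restr_s sum_negf)
  finally show ?thesis
    by simp
qed

lemma LamG_pos:
  assumes nonneg: "\<forall>e\<in>paulis n. P g e \<ge> 0"
    and distr: "(\<Sum>e\<in>paulis n. P g e) = 1"
    and idbig: "P g (\<lambda>i. PI) > 1/2"
  shows "LamG n P g R > 0"
proof -
  have I: "(\<lambda>i. PI) \<in> paulis n"
    by (simp add: paulis_def)
  let ?E = "paulis n - {\<lambda>i. PI}"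
  have "LamG n P g R = P g (\<lambda>i. PI) + (\<Sum>e\<in>?E. P g e * comm n e R)"
    unfolding LamG_def using I finite_paulis by (simp add: sum.remove comm_identity)
  moreover have "(\<Sum>e\<in>?E. - P g e) \<le> (\<Sum>e\<in>?E. P g e * comm n e R)"
  proof (rule sum_mono)
    fix e
    assume "e \<in> ?E"
    then have "P g e \<ge> 0"
      using nonneg by auto
    then show "- P g e \<le> P g e * comm n e R"
      using comm_cases[of n e R] by auto
  qed
  moreover have "(\<Sum>e\<in>?E. P g e) = 1 - P g (\<lambda>i. PI)"
    using distr I finite_paulis by (simp add: sum.remove)
  ultimately show ?thesis
    using idbig by (simp add: sum_negf)
qed

lemma logU_eq_sum_logUG:
  assumes "finite Gam" and "\<And>g R. g \<in> Gam \<Longrightarrow> LamG n P g R > 0"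
  shows "logU n Gam P Q = (\<Sum>g\<in>Gam. logUG n P g Q)"
proof -
  have ln_Lam: "ln (Lam n Gam P Q') = (\<Sum>g\<in>Gam. ln (LamG n P g (restr g Q')))" for Q'
    unfolding Lam_def using assms(1) by (rule ln_prod) (metis assms(2) less_irrefl)
  have "logU n Gam P Q
      = - 2 / 4 ^ n * (\<Sum>Q'\<in>paulis n. \<Sum>g\<in>Gam. comm n Q' Q * ln (LamG n P g (restr g Q')))"
    unfolding logU_def ln_Lam by (simp add: sum_distrib_left)
  also have "\<dots> = - 2 / 4 ^ n * (\<Sum>g\<in>Gam. \<Sum>Q'\<in>paulis n. comm n Q' Q * ln (LamG n P g (restr g Q')))"
    by (subst sum.swap) (rule refl)
  also have "\<dots> = (\<Sum>g\<in>Gam. logUG n P g Q)"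
    unfolding logUG_def by (simp add: sum_distrib_left)
  finally show ?thesis .
qed

lemma logUG_eq_0:
  assumes "Q \<in> paulis n" and "\<not> supp Q \<subseteq> g"
  shows "logUG n P g Q = 0"
  unfolding logUG_def using sum_comm_restr_eq_0[OF assms] by simp

theorem lemma1:
  fixes n :: nat and Gam :: "nat set set"
    and P :: "nat set \<Rightarrow> (nat \<Rightarrow> pauli) \<Rightarrow> real"
  assumes finGam: "finite Gam"
    and subs: "\<forall>g\<in>Gam. g \<subseteq> {1..n}"
    and nonneg: "\<forall>g\<in>Gam. \<forall>e\<in>paulis n. P g e \<ge> 0"
    and distr: "\<forall>g\<in>Gam. (\<Sum>e\<in>paulis n. P g e) = 1"
    and local: "\<forall>g\<in>Gam. \<forall>e\<in>paulis n. \<not> supp e \<subseteq> g \<longrightarrow> P g e = 0"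
    and idbig: "\<forall>g\<in>Gam. P g (\<lambda>i. PI) > 1/2"
    and pos: "\<forall>g\<in>Gam. \<forall>e\<in>paulis n. supp e \<subseteq> g \<and> e \<noteq> (\<lambda>i. PI) \<longrightarrow> P g e > 0"
  shows "\<forall>Q\<in>paulis n.
           logU n Gam P Q = (\<Sum>g\<in>Gam. logUG n P g Q)
         \<and> (\<forall>g\<in>Gam. \<not> supp Q \<subseteq> g \<longrightarrow> logUG n P g Q = 0)
         \<and> ((\<forall>g\<in>Gam. \<not> supp Q \<subseteq> g) \<longrightarrow> logU n Gam P Q = 0)"
proof (intro ballI conjI impI)
  fix Q
  assume Q: "Q \<in> paulis n"
  have LamG_positive: "LamG n P g R > 0" if "g \<in> Gam" for g R
    using that nonneg distr idbig by (intro LamG_pos) auto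
  show split: "logU n Gam P Q = (\<Sum>g\<in>Gam. logUG n P g Q)"
    using finGam LamG_positive by (rule logU_eq_sum_logUG)
  show "logUG n P g Q = 0" if "\<not> supp Q \<subseteq> g" for g
    using Q that by (rule logUG_eq_0)
  assume "\<forall>g\<in>Gam. \<not> supp Q \<subseteq> g"
  then show "logU n Gam P Q = 0"
    unfolding split using Q by (simp add: logUG_eq_0)
qed

end
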